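(* Let $p\in(0,1/2)$, $\gamma\in(0,1)$, $L\ge1$ an integer, and let $\mathcal{C}\subseteq\mathbb{F}_2^n$ be a linear code of dimension $k\le(1-\gamma)n$ such that for all $1\le\ell\le L$, $$Q_{\mathcal{C}}^{(\ge\ell)}\le\left(2^{-n(1-H(p))}\cdot2^k\right)^\ell\cdot2^{\gamma\ell^2n}.$$ Then for $b$ chosen uniformly from $\mathbb{F}_2^n$, with probability at least $1-4L^3\cdot2^{-\gamma n}$ over $b$, for all $1\le\ell\le L$, $$Q_{\mathcal{C}+\{0,b\}}^{(\ge\ell)}\le\left(2^{-n(1-H(p))}\cdot2^{k+1}\right)^\ell\cdot2^{\gamma\ell^2n}.$$
   Context: $\Delta$ is Hamming distance, $L_{\mathcal{C}}(x)=|\{c\in\mathcal{C}:\Delta(x,c)\le pn\}|$, $H(p)=-p\log_2p-(1-p)\log_2(1-p)$. $P_{\mathcal{C}}^{(\ell)}=2^{-n}|\{x\in\mathbb{F}_2^n:L_{\mathcal{C}}(x)=\ell\}|$ and $Q_{\mathcal{C}}^{(\ge\ell)}=\sum_{i\ge\ell}i\cdot P_{\mathcal{C}}^{(i)}$. $\mathcal{C}+\{0,b\}=\mathcal{C}\cup(\mathcal{C}+b)$. *)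

theory Defs
  imports "HOL-Analysis.Analysis"
begin

text \<open>Vectors of F_2^n are boolean lists of length n; addition is coordinatewise XOR.\<close>

definition cube :: "nat \<Rightarrow> bool list set" where
  "cube n = {x. length x = n}"

definition vadd :: "bool list \<Rightarrow> bool list \<Rightarrow> bool list" where
  "vadd x y = map2 (\<lambda>a b. a \<noteq> b) x y"

definition hamming :: "bool list \<Rightarrow> bool list \<Rightarrow> nat" where
  "hamming x y = card {i. i < length x \<and> x ! i \<noteq> y ! i}"

definition linear_code :: "nat \<Rightarrow> bool list set \<Rightarrow> bool" where
  "linear_code n C \<longleftrightarrow> C \<subseteq> cube n \<and> replicate n False \<in> C
      \<and> (\<forall>x\<in>C. \<forall>y\<in>C. vadd x y \<in> C)"

definition code_dim :: "bool list set \<Rightarrow> nat \<Rightarrow> bool" where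
  "code_dim C k \<longleftrightarrow> card C = 2 ^ k"

definition list_size :: "nat \<Rightarrow> real \<Rightarrow> bool list set \<Rightarrow> bool list \<Rightarrow> nat" where
  "list_size n p C x = card {c\<in>C. real (hamming x c) \<le> p * real n}"

definition P_frac :: "nat \<Rightarrow> real \<Rightarrow> bool list set \<Rightarrow> nat \<Rightarrow> real" where
  "P_frac n p C l = card {x\<in>cube n. list_size n p C x = l} / 2 ^ n"

definition Q_ge :: "nat \<Rightarrow> real \<Rightarrow> bool list set \<Rightarrow> nat \<Rightarrow> real" where
  "Q_ge n p C l = (\<Sum>i\<in>{l..card C}. real i * P_frac n p C i)"

definition shift_union :: "bool list set \<Rightarrow> bool list \<Rightarrow> bool list set" where
  "shift_union C b = C \<union> (\<lambda>c. vadd c b) ` C"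

definition H2 :: "real \<Rightarrow> real" where
  "H2 p = - p * log 2 p - (1 - p) * log 2 (1 - p)"

end

theory Submission
  imports Defs
begin

(* Since L_{C+{0,b}}(x) <= L_C(x) + L_C(x+b), the l-tail mass of the union exceeds twice that of C
   only at points where both list sizes stay below l while their sum does not.  Such points are
   charged to products of i-tail and (l-i)-tail weights at x and x+b, and averaging over b turns
   their total into the convolution of the tails of C.  Because i^2 + (l-i)^2 <= l^2 - 2, the
   hypothesis makes this convolution smaller than the target by a factor 2^(-2 gamma n), so
   Markov's inequality bounds the bad shifts for each l >= 2, and a union bound over l finishes;
   l = 1 never fails. *)

lemma finite_cube: "finite (cube n)"
  using finite_lists_length_eq[of "UNIV :: bool set" n] by (simp add: cube_def)

lemma card_cube: "card (cube n) = 2 ^ n"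
  using card_lists_length_eq[of "UNIV :: bool set" n] by (simp add: cube_def)

lemma length_vadd [simp]: "length (vadd x y) = min (length x) (length y)"
  by (simp add: vadd_def)

lemma nth_vadd: "i < length x \<Longrightarrow> i < length y \<Longrightarrow> vadd x y ! i = (x ! i \<noteq> y ! i)"
  by (simp add: vadd_def)

lemma vadd_vadd_cancel: "length x = length b \<Longrightarrow> vadd (vadd x b) b = x"
  by (rule nth_equalityI) (auto simp: nth_vadd)

lemma vadd_commute: "vadd x y = vadd y x"
  unfolding vadd_def by (rule nth_equalityI) auto

lemma vadd_in_cube: "x \<in> cube n \<Longrightarrow> b \<in> cube n \<Longrightarrow> vadd x b \<in> cube n"
  by (simp add: cube_def)

lemma sum_cube_vadd:
  "b \<in> cube n \<Longrightarrow> (\<Sum>x\<in>cube n. g (vadd x b)) = (\<Sum>x\<in>cube n. g x)"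
  by (rule sum.reindex_bij_witness[where i = "\<lambda>x. vadd x b" and j = "\<lambda>x. vadd x b"])
    (auto simp: vadd_vadd_cancel vadd_in_cube cube_def)

lemma sum_cube_vadd_product:
  fixes f g :: "bool list \<Rightarrow> 'a :: comm_semiring_1"
  shows "(\<Sum>b\<in>cube n. \<Sum>x\<in>cube n. f x * g (vadd x b)) = (\<Sum>x\<in>cube n. f x) * (\<Sum>y\<in>cube n. g y)"
proof -
  have "(\<Sum>b\<in>cube n. \<Sum>x\<in>cube n. f x * g (vadd x b)) = (\<Sum>x\<in>cube n. f x * (\<Sum>b\<in>cube n. g (vadd b x)))"
    by (subst sum.swap) (simp add: sum_distrib_left vadd_commute)
  also have "\<dots> = (\<Sum>x\<in>cube n. f x * (\<Sum>y\<in>cube n. g y))"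
    by (intro sum.cong refl) (simp add: sum_cube_vadd)
  finally show ?thesis by (simp add: sum_distrib_right)
qed

lemma hamming_vadd_swap:
  "length x = length b \<Longrightarrow> length c = length b \<Longrightarrow> hamming x (vadd c b) = hamming (vadd x b) c"
  unfolding hamming_def by (rule arg_cong[where f = card]) (auto simp: nth_vadd)

lemma list_size_shift_union_le:
  assumes "C \<subseteq> cube n" "x \<in> cube n" "b \<in> cube n"
  shows "list_size n p (shift_union C b) x \<le> list_size n p C x + list_size n p C (vadd x b)"
proof -
  let ?near = "\<lambda>y c. real (hamming y c) \<le> p * real n"
  have fin: "finite C" using assms(1) finite_cube finite_subset by blast
  have "{c \<in> shift_union C b. ?near x c} = {c \<in> C. ?near x c} \<union> (\<lambda>c. vadd c b) ` {c \<in> C. ?near x (vadd c b)}"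
    unfolding shift_union_def by auto
  also have "{c \<in> C. ?near x (vadd c b)} = {c \<in> C. ?near (vadd x b) c}"
    using assms by (auto simp: hamming_vadd_swap cube_def subset_iff)
  finally have "card {c \<in> shift_union C b. ?near x c}
      \<le> card {c \<in> C. ?near x c} + card ((\<lambda>c. vadd c b) ` {c \<in> C. ?near (vadd x b) c})"
    by (simp add: card_Un_le)
  also have "\<dots> \<le> card {c \<in> C. ?near x c} + card {c \<in> C. ?near (vadd x b) c}"
    using fin by (simp add: card_image_le)
  finally show ?thesis unfolding list_size_def .
qed

definition tail_weight :: "nat \<Rightarrow> nat \<Rightarrow> real" where
  "tail_weight l a = (if l \<le> a then real a else 0)"

definition tail_sum :: "nat \<Rightarrow> real \<Rightarrow> bool list set \<Rightarrow> nat \<Rightarrow> real" where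
  "tail_sum n p D l = (\<Sum>x\<in>cube n. tail_weight l (list_size n p D x))"

lemma tail_weight_nonneg: "0 \<le> tail_weight l a"
  by (simp add: tail_weight_def)

lemma tail_weight_mono: "a \<le> c \<Longrightarrow> tail_weight l a \<le> tail_weight l c"
  by (simp add: tail_weight_def)

lemma tail_sum_nonneg: "0 \<le> tail_sum n p D l"
  unfolding tail_sum_def by (intro sum_nonneg tail_weight_nonneg)

lemma Q_ge_eq_tail_sum:
  assumes "finite D"
  shows "Q_ge n p D l = tail_sum n p D l / 2 ^ n"
proof -
  let ?L = "list_size n p D"
  have bounded: "?L x \<le> card D" for x
    unfolding list_size_def using assms by (intro card_mono) auto
  have "tail_sum n p D l = (\<Sum>x\<in>cube n. \<Sum>i\<in>{l..card D}. if ?L x = i then real i else 0)"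
    unfolding tail_sum_def tail_weight_def using bounded by (intro sum.cong) (auto simp: sum.delta)
  also have "\<dots> = (\<Sum>i\<in>{l..card D}. \<Sum>x\<in>cube n. if ?L x = i then real i else 0)"
    by (rule sum.swap)
  also have "\<dots> = (\<Sum>i\<in>{l..card D}. real i * card {x \<in> cube n. ?L x = i})"
    by (intro sum.cong refl) (simp add: sum.inter_filter[OF finite_cube, symmetric])
  finally show ?thesis
    unfolding Q_ge_def P_frac_def by (simp add: sum_divide_distrib)
qed

definition split_weight :: "nat \<Rightarrow> nat \<Rightarrow> nat \<Rightarrow> real" where
  "split_weight l a c = (\<Sum>i\<in>{1..<l}. tail_weight i a * tail_weight (l - i) c)"

lemma split_weight_nonneg: "0 \<le> split_weight l a c"
  unfolding split_weight_def by (intro sum_nonneg mult_nonneg_nonneg tail_weight_nonneg)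

lemma le_split_weight:
  assumes "1 \<le> a" "a < l" "l \<le> a + c"
  shows "real a \<le> split_weight l a c"
proof -
  have "real a \<le> tail_weight a a * tail_weight (l - a) c"
    using assms by (simp add: tail_weight_def)
  also have "\<dots> \<le> split_weight l a c"
    unfolding split_weight_def using assms
    by (intro member_le_sum mult_nonneg_nonneg tail_weight_nonneg) auto
  finally show ?thesis .
qed

lemma tail_weight_add_le:
  "tail_weight l (a + c) \<le> tail_weight l a + tail_weight l c + split_weight l a c + split_weight l c a"
  using le_split_weight[of a l c] le_split_weight[of c l a]
    split_weight_nonneg[of l a c] split_weight_nonneg[of l c a]
  by (cases "a = 0"; cases "c = 0") (auto simp: tail_weight_def add.commute)

definition shift_excess :: "nat \<Rightarrow> real \<Rightarrow> bool list set \<Rightarrow> nat \<Rightarrow> bool list \<Rightarrow> real" where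
  "shift_excess n p C l b = (\<Sum>x\<in>cube n.
      split_weight l (list_size n p C x) (list_size n p C (vadd x b))
    + split_weight l (list_size n p C (vadd x b)) (list_size n p C x))"

lemma shift_excess_nonneg: "0 \<le> shift_excess n p C l b"
  unfolding shift_excess_def by (intro sum_nonneg add_nonneg_nonneg split_weight_nonneg)

lemma tail_sum_shift_union_le:
  assumes "C \<subseteq> cube n" "b \<in> cube n"
  shows "tail_sum n p (shift_union C b) l \<le> 2 * tail_sum n p C l + shift_excess n p C l b"
proof -
  let ?L = "list_size n p C"
  have "tail_sum n p (shift_union C b) l \<le> (\<Sum>x\<in>cube n. tail_weight l (?L x + ?L (vadd x b)))"
    unfolding tail_sum_def
    using list_size_shift_union_le[OF assms(1) _ assms(2)]
    by (intro sum_mono tail_weight_mono)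
  also have "\<dots> \<le> (\<Sum>x\<in>cube n. tail_weight l (?L x) + tail_weight l (?L (vadd x b))
      + (split_weight l (?L x) (?L (vadd x b)) + split_weight l (?L (vadd x b)) (?L x)))"
    by (intro sum_mono) (use tail_weight_add_le in \<open>simp add: add.assoc\<close>)
  also have "\<dots> = 2 * tail_sum n p C l + shift_excess n p C l b"
    unfolding tail_sum_def shift_excess_def sum.distrib
    using sum_cube_vadd[OF assms(2), of "\<lambda>y. tail_weight l (?L y)"] by simp
  finally show ?thesis .
qed

lemma sum_shift_excess:
  "(\<Sum>b\<in>cube n. shift_excess n p C l b)
     = 2 * (\<Sum>i\<in>{1..<l}. tail_sum n p C i * tail_sum n p C (l - i))"
proof -
  let ?w = "\<lambda>i x. tail_weight i (list_size n p C x)"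
  have "(\<Sum>b\<in>cube n. shift_excess n p C l b)
      = (\<Sum>i\<in>{1..<l}. (\<Sum>b\<in>cube n. \<Sum>x\<in>cube n. ?w i x * ?w (l - i) (vadd x b))
                    + (\<Sum>b\<in>cube n. \<Sum>x\<in>cube n. ?w (l - i) x * ?w i (vadd x b)))"
    unfolding shift_excess_def split_weight_def sum.distrib[symmetric] sum_distrib_left
    by (subst sum.swap, rule sum.cong, simp, subst sum.swap, simp add: sum.distrib mult.commute)
  also have "\<dots> = (\<Sum>i\<in>{1..<l}. 2 * (tail_sum n p C i * tail_sum n p C (l - i)))"
  proof (rule sum.cong[OF refl])
    fix i
    show "(\<Sum>b\<in>cube n. \<Sum>x\<in>cube n. ?w i x * ?w (l - i) (vadd x b))
        + (\<Sum>b\<in>cube n. \<Sum>x\<in>cube n. ?w (l - i) x * ?w i (vadd x b))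
        = 2 * (tail_sum n p C i * tail_sum n p C (l - i))"
      using sum_cube_vadd_product[where f = "?w i" and g = "?w (l - i)"]
        sum_cube_vadd_product[where f = "?w (l - i)" and g = "?w i"]
      unfolding tail_sum_def by simp
  qed
  finally show ?thesis by (simp add: sum_distrib_left)
qed

definition list_bound :: "real \<Rightarrow> real \<Rightarrow> nat \<Rightarrow> nat \<Rightarrow> real" where
  "list_bound \<beta> \<gamma> n l = \<beta> ^ l * 2 powr (\<gamma> * real l ^ 2 * real n)"

lemma list_bound_pos: "0 < \<beta> \<Longrightarrow> 0 < list_bound \<beta> \<gamma> n l"
  by (simp add: list_bound_def)

lemma list_bound_mult_le:
  assumes "0 \<le> \<beta>" "0 \<le> \<gamma>" "1 \<le> i" "1 \<le> j"
  shows "list_bound \<beta> \<gamma> n i * list_bound \<beta> \<gamma> n j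
           \<le> list_bound \<beta> \<gamma> n (i + j) * 2 powr (- 2 * \<gamma> * real n)"
proof -
  have "1 \<le> real i * real j"
    using assms by (metis mult_mono' of_nat_0_le_iff of_nat_1 of_nat_le_iff mult_1_right)
  then have "real i ^ 2 + real j ^ 2 \<le> real (i + j) ^ 2 - 2"
    by (simp add: power2_eq_square algebra_simps)
  then have "\<gamma> * real n * (real i ^ 2 + real j ^ 2) \<le> \<gamma> * real n * (real (i + j) ^ 2 - 2)"
    using assms by (intro mult_left_mono) auto
  then have "2 powr (\<gamma> * real i ^ 2 * real n + \<gamma> * real j ^ 2 * real n)
      \<le> 2 powr (\<gamma> * real (i + j) ^ 2 * real n + - 2 * \<gamma> * real n)"
    by (intro powr_mono) (auto simp: algebra_simps)
  then show ?thesis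
    unfolding list_bound_def powr_add power_add using assms
    by (simp add: algebra_simps mult_left_mono)
qed

lemma sum_convolution_list_bound_le:
  fixes S :: "nat \<Rightarrow> real"
  assumes "0 \<le> \<gamma>" "0 < \<beta>" "0 \<le> c"
    and S: "\<forall>i\<in>{1..<l}. 0 \<le> S i \<and> S i \<le> c * list_bound \<beta> \<gamma> n i"
  shows "(\<Sum>i\<in>{1..<l}. S i * S (l - i))
           \<le> real (l - 1) * (c * c * list_bound \<beta> \<gamma> n l * 2 powr (- 2 * \<gamma> * real n))"
proof -
  have "S i * S (l - i) \<le> c * c * list_bound \<beta> \<gamma> n l * 2 powr (- 2 * \<gamma> * real n)"
    if i: "i \<in> {1..<l}" for i
  proof -
    have l_i: "l - i \<in> {1..<l}" using i by auto
    have "S i * S (l - i) \<le> (c * list_bound \<beta> \<gamma> n i) * (c * list_bound \<beta> \<gamma> n (l - i))"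
      using S i l_i \<open>0 \<le> c\<close> less_imp_le[OF list_bound_pos[OF \<open>0 < \<beta>\<close>]]
      by (intro mult_mono) auto
    also have "\<dots> = c * c * (list_bound \<beta> \<gamma> n i * list_bound \<beta> \<gamma> n (l - i))"
      by (simp add: algebra_simps)
    also have "\<dots> \<le> c * c * (list_bound \<beta> \<gamma> n l * 2 powr (- 2 * \<gamma> * real n))"
      using list_bound_mult_le[of \<beta> \<gamma> i "l - i" n] i assms by (intro mult_left_mono) auto
    finally show ?thesis by (simp add: mult.assoc)
  qed
  then have "(\<Sum>i\<in>{1..<l}. S i * S (l - i))
      \<le> real (card {1..<l}) * (c * c * list_bound \<beta> \<gamma> n l * 2 powr (- 2 * \<gamma> * real n))"
    by (rule sum_bounded_above)
  then show ?thesis by simp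
qed

lemma card_gt_mult_le_sum:
  fixes f :: "'a \<Rightarrow> real"
  assumes "finite A" "\<And>x. x \<in> A \<Longrightarrow> 0 \<le> f x"
  shows "real (card {x \<in> A. t < f x}) * t \<le> (\<Sum>x\<in>A. f x)"
proof -
  have "real (card {x \<in> A. t < f x}) * t \<le> (\<Sum>x\<in>{x \<in> A. t < f x}. f x)"
    using sum_bounded_below[of "{x \<in> A. t < f x}" t f] by (simp add: less_imp_le)
  also have "\<dots> \<le> (\<Sum>x\<in>A. f x)"
    using assms by (intro sum_mono2) auto
  finally show ?thesis .
qed

lemma card_bad_shifts_le:
  assumes C: "C \<subseteq> cube n" and "0 \<le> \<gamma>" "0 < \<beta>" "2 \<le> l"
    and hyp: "\<forall>i\<in>{1..l}. tail_sum n p C i \<le> 2 ^ n * list_bound \<beta> \<gamma> n i"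
  shows "real (card {b \<in> cube n. 2 ^ n * (2 ^ l * list_bound \<beta> \<gamma> n l) < tail_sum n p (shift_union C b) l})
           \<le> real (l - 1) * 2 ^ n * 2 powr (- 2 * \<gamma> * real n)"
proof -
  define W where "W = 2 ^ n * list_bound \<beta> \<gamma> n l"
  define P where "P = (2 :: real) powr (- 2 * \<gamma> * real n)"
  let ?bad = "{b \<in> cube n. 2 ^ n * (2 ^ l * list_bound \<beta> \<gamma> n l) < tail_sum n p (shift_union C b) l}"
  let ?excessive = "{b \<in> cube n. 2 * W < shift_excess n p C l b}"
  have W_pos: "0 < W"
    unfolding W_def using list_bound_pos[OF \<open>0 < \<beta>\<close>] by simp
  have "?bad \<subseteq> ?excessive"
  proof safe
    fix b assume b: "b \<in> cube n" and big: "2 ^ n * (2 ^ l * list_bound \<beta> \<gamma> n l) < tail_sum n p (shift_union C b) l"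
    have "(2 :: real) ^ 2 \<le> 2 ^ l" using \<open>2 \<le> l\<close> by (intro power_increasing) auto
    then have "2 ^ n * (4 * list_bound \<beta> \<gamma> n l) \<le> 2 ^ n * (2 ^ l * list_bound \<beta> \<gamma> n l)"
      by (intro mult_left_mono mult_right_mono) (auto intro: less_imp_le list_bound_pos \<open>0 < \<beta>\<close>)
    then have "4 * W \<le> 2 ^ n * (2 ^ l * list_bound \<beta> \<gamma> n l)"
      unfolding W_def by (simp add: mult.left_commute)
    moreover have "tail_sum n p C l \<le> W" unfolding W_def using hyp \<open>2 \<le> l\<close> by simp
    ultimately show "2 * W < shift_excess n p C l b"
      using big tail_sum_shift_union_le[OF C b, of p l] by linarith
  qed
  then have bad_le: "real (card ?bad) \<le> real (card ?excessive)"
    by (intro of_nat_mono card_mono) (auto intro: finite_subset[OF _ finite_cube])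
  have "real (card ?excessive) * (2 * W) \<le> (\<Sum>b\<in>cube n. shift_excess n p C l b)"
    by (rule card_gt_mult_le_sum[OF finite_cube shift_excess_nonneg])
  also have "\<dots> \<le> 2 * (real (l - 1) * (2 ^ n * 2 ^ n * list_bound \<beta> \<gamma> n l * P))"
    unfolding sum_shift_excess P_def using hyp
    by (intro mult_left_mono sum_convolution_list_bound_le \<open>0 \<le> \<gamma>\<close> \<open>0 < \<beta>\<close>)
      (auto simp: tail_sum_nonneg)
  finally have "real (card ?excessive) * (2 * W) \<le> (real (l - 1) * 2 ^ n * P) * (2 * W)"
    unfolding W_def by (simp add: algebra_simps)
  then have "real (card ?excessive) \<le> real (l - 1) * 2 ^ n * P"
    using W_pos by simp
  with bad_le show ?thesis unfolding P_def by linarith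
qed

lemma card_good_shifts_ge:
  assumes C: "C \<subseteq> cube n" and "0 \<le> \<gamma>" "0 < \<beta>"
    and hyp: "\<forall>l\<in>{1..L}. tail_sum n p C l \<le> 2 ^ n * list_bound \<beta> \<gamma> n l"
  shows "2 ^ n * (1 - real L ^ 2 * 2 powr (- 2 * \<gamma> * real n))
    \<le> real (card {b \<in> cube n. \<forall>l\<in>{1..L}.
          tail_sum n p (shift_union C b) l \<le> 2 ^ n * (2 ^ l * list_bound \<beta> \<gamma> n l)})"
proof -
  let ?T = "\<lambda>l. 2 ^ n * (2 ^ l * list_bound \<beta> \<gamma> n l)"
  define P where "P = (2 :: real) powr (- 2 * \<gamma> * real n)"
  define G where "G = {b \<in> cube n. \<forall>l\<in>{1..L}. tail_sum n p (shift_union C b) l \<le> ?T l}"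
  define Bad where "Bad l = {b \<in> cube n. ?T l < tail_sum n p (shift_union C b) l}" for l
  have level_one: "tail_sum n p (shift_union C b) 1 \<le> ?T 1" if "b \<in> cube n" "1 \<le> L" for b
  proof -
    have "shift_excess n p C 1 b = 0"
      by (simp add: shift_excess_def split_weight_def)
    moreover have "tail_sum n p C 1 \<le> 2 ^ n * list_bound \<beta> \<gamma> n 1"
      by (rule hyp[rule_format]) (use that(2) in simp)
    ultimately show ?thesis
      using tail_sum_shift_union_le[OF C that(1), of p 1] by simp
  qed
  let ?U = "\<Union>l\<in>{2..L}. Bad l"
  have "cube n \<subseteq> G \<union> ?U"
  proof
    fix b assume b: "b \<in> cube n"
    have "tail_sum n p (shift_union C b) l \<le> ?T l" if "l \<in> {1..L}" "b \<notin> ?U" for l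
    proof (cases "l = 1")
      case True
      then show ?thesis using level_one[OF b] that(1) by simp
    next
      case False
      with that have "b \<notin> Bad l" by auto
      then show ?thesis using b unfolding Bad_def by (simp add: not_less)
    qed
    then show "b \<in> G \<union> ?U" unfolding G_def using b by blast
  qed
  moreover have "finite (G \<union> ?U)"
    by (rule finite_subset[OF _ finite_cube]) (auto simp: G_def Bad_def)
  ultimately have "card (cube n) \<le> card G + card ?U"
    by (meson card_Un_le card_mono order_trans)
  also have "\<dots> \<le> card G + (\<Sum>l\<in>{2..L}. card (Bad l))"
    by (simp add: card_UN_le)
  finally have "real (card (cube n)) \<le> real (card G + (\<Sum>l\<in>{2..L}. card (Bad l)))"
    by (rule of_nat_mono)
  then have "2 ^ n \<le> real (card G) + (\<Sum>l\<in>{2..L}. real (card (Bad l)))"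
    by (simp add: card_cube)
  also have "(\<Sum>l\<in>{2..L}. real (card (Bad l))) \<le> real (card {2..L}) * (real L * 2 ^ n * P)"
  proof (rule sum_bounded_above)
    fix l assume l: "l \<in> {2..L}"
    have "real (card (Bad l)) \<le> real (l - 1) * 2 ^ n * P"
      unfolding Bad_def P_def using l hyp
      by (intro card_bad_shifts_le[OF C \<open>0 \<le> \<gamma>\<close> \<open>0 < \<beta>\<close>]) auto
    also have "\<dots> \<le> real L * 2 ^ n * P"
      using l unfolding P_def by (intro mult_right_mono) auto
    finally show "real (card (Bad l)) \<le> real L * 2 ^ n * P" .
  qed
  also have "real (card {2..L}) * (real L * 2 ^ n * P) \<le> real L * (real L * 2 ^ n * P)"
    unfolding P_def by (intro mult_right_mono) auto
  finally show ?thesis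
    unfolding G_def P_def by (simp add: algebra_simps power2_eq_square)
qed

theorem lemma4:
  fixes n k L :: nat and p \<gamma> :: real and C :: "bool list set"
  assumes "0 < p" "p < 1/2" "0 < \<gamma>" "\<gamma> < 1" "L \<ge> 1"
    and "linear_code n C" "code_dim C k" "real k \<le> (1 - \<gamma>) * real n"
    and "\<forall>l\<in>{1..L}. Q_ge n p C l
           \<le> (2 powr (- real n * (1 - H2 p)) * 2 ^ k) ^ l * 2 powr (\<gamma> * real l ^ 2 * real n)"
  shows "card {b\<in>cube n. \<forall>l\<in>{1..L}. Q_ge n p (shift_union C b) l
           \<le> (2 powr (- real n * (1 - H2 p)) * 2 ^ (k + 1)) ^ l * 2 powr (\<gamma> * real l ^ 2 * real n)}
         / 2 ^ n \<ge> 1 - 4 * real L ^ 3 * 2 powr (- \<gamma> * real n)"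
proof -
  define \<beta> where "\<beta> = 2 powr (- real n * (1 - H2 p)) * 2 ^ k"
  have C: "C \<subseteq> cube n" using assms(6) by (simp add: linear_code_def)
  then have fin: "finite (shift_union C b)" "finite C" for b
    using finite_cube finite_subset by (auto simp: shift_union_def)
  have bound_eq: "(2 powr (- real n * (1 - H2 p)) * 2 ^ (k + j)) ^ l * 2 powr (\<gamma> * real l ^ 2 * real n)
      = (2 ^ j) ^ l * list_bound \<beta> \<gamma> n l" for j l
    unfolding list_bound_def \<beta>_def by (simp add: power_add power_mult_distrib)
  have hyp: "\<forall>l\<in>{1..L}. tail_sum n p C l \<le> 2 ^ n * list_bound \<beta> \<gamma> n l"
    using assms(9) bound_eq[of 0] by (simp add: Q_ge_eq_tail_sum[OF fin(2)] divide_le_eq mult.commute)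
  let ?good = "{b \<in> cube n. \<forall>l\<in>{1..L}. Q_ge n p (shift_union C b) l
           \<le> (2 powr (- real n * (1 - H2 p)) * 2 ^ (k + 1)) ^ l * 2 powr (\<gamma> * real l ^ 2 * real n)}"
  have "2 ^ n * (1 - real L ^ 2 * 2 powr (- 2 * \<gamma> * real n)) \<le> real (card ?good)"
    using card_good_shifts_ge[OF C _ _ hyp] assms(3) bound_eq[of 1]
    by (simp add: \<beta>_def Q_ge_eq_tail_sum[OF fin(1)] divide_le_eq mult.commute)
  moreover have "real L ^ 2 * 2 powr (- 2 * \<gamma> * real n) \<le> 4 * real L ^ 3 * 2 powr (- \<gamma> * real n)"
  proof (rule mult_mono)
    have "real L ^ 2 * 1 \<le> real L ^ 2 * (4 * real L)"
      using assms(5) by (intro mult_left_mono) auto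
    then show "real L ^ 2 \<le> 4 * real L ^ 3"
      by (simp add: power2_eq_square power3_eq_cube mult.left_commute)
    show "2 powr (- 2 * \<gamma> * real n) \<le> 2 powr (- \<gamma> * real n)"
      using assms(3) by (intro powr_mono) auto
  qed simp_all
  ultimately have "2 ^ n * (1 - 4 * real L ^ 3 * 2 powr (- \<gamma> * real n)) \<le> real (card ?good)"
    by (smt (verit) mult_left_mono zero_le_power zero_le_numeral)
  then show ?thesis by (simp add: pos_le_divide_eq mult.commute)
qed

end
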